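(* Let $X$ be a Tychonoff topological space which is hereditarily Lindelöf and is an $F_{\sigma\delta}$ space. Then $X$ is absolutely $F_{\sigma\delta}$.
   Context: A compactification of a Tychonoff space $X$ is a pair $(cX,\varphi)$ where $cX$ is a compact (Hausdorff) space and $\varphi$ is a homeomorphic embedding of $X$ onto a dense subspace of $cX$; we identify $X$ with $\varphi(X)$. $X$ is called an $F_{\sigma\delta}$ space if there exists a compactification $cX$ of $X$ such that $X$ is an $F_{\sigma\delta}$ subset of $cX$ (a countable intersection of countable unions of closed subsets of $cX$). $X$ is called absolutely $F_{\sigma\delta}$ if $X$ is an $F_{\sigma\delta}$ subset of $cX$ for every compactification $cX$ of $X$. *)

theory Defs
  imports "HOL-Analysis.Analysis"
begin

definition Tychonoff_space :: "'a topology \<Rightarrow> bool" where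
  "Tychonoff_space X \<equiv> completely_regular_space X \<and> Hausdorff_space X"

definition hereditarily_Lindelof_space :: "'a topology \<Rightarrow> bool" where
  "hereditarily_Lindelof_space X \<equiv>
     (\<forall>S. S \<subseteq> topspace X \<longrightarrow> Lindelof_space (subtopology X S))"

definition fsigmadelta_in :: "'a topology \<Rightarrow> 'a set \<Rightarrow> bool" where
  "fsigmadelta_in X \<equiv> (countable intersection_of fsigma_in X) relative_to topspace X"

definition compactification :: "'a topology \<Rightarrow> 'b topology \<Rightarrow> ('a \<Rightarrow> 'b) \<Rightarrow> bool" where
  "compactification X cX \<phi> \<equiv>
     compact_space cX \<and> Hausdorff_space cX \<and> embedding_map X cX \<phi> \<and>
     cX closure_of (\<phi> ` topspace X) = topspace cX"

end

theory Submission
  imports Defs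
begin

text \<open>Write \<open>X = K \<inter> (\<Inter>n. \<Union>m. F n m)\<close> in a compactification \<open>K\<close>, with closed \<open>F n m\<close>.
  Finite sequences \<open>l\<close> of indices cut \<open>X\<close> into closed cells, forming a countably branching
  tree. In another compactification \<open>L\<close>, hereditary Lindel\<ouml>fness separates the image of the
  complement of each cell from the closure of the image of the cell by an \<open>F\<^sub>\<sigma>\<close> set; together
  with the closures of the children of the cell these give countably many \<open>F\<^sub>\<sigma>\<close> sets
  whose intersection contains \<open>X\<close>. A point \<open>z\<close> of that intersection lies in the closures of
  all cells along some infinite branch. The branch determines a compact subset of \<open>X\<close>
  (its trace in \<open>K\<close> is closed and lies in \<open>X\<close>), and compactness of \<open>K\<close> shows that every
  neighbourhood of that compact set eventually contains the cells of the branch; since \<open>L\<close> is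
  Hausdorff, \<open>z\<close> must lie in its image.\<close>

lemma embedding_map_imp_continuous_map:
  "embedding_map X K f \<Longrightarrow> continuous_map X K f"
  unfolding embedding_map_def
  using continuous_map_in_subtopology homeomorphic_imp_continuous_map by blast

lemma embedding_map_openin_preimage:
  assumes f: "embedding_map X K f" and U: "openin X U"
  obtains G where "openin K G" "U = {x \<in> topspace X. f x \<in> G}"
proof -
  have hom: "homeomorphic_map X (subtopology K (f ` topspace X)) f"
    using f by (simp add: embedding_map_def)
  have "openin (subtopology K (f ` topspace X)) (f ` U)"
    using homeomorphic_map_openness[OF hom openin_subset[OF U]] U by simp
  then obtain G where G: "openin K G" "f ` U = G \<inter> f ` topspace X"
    by (auto simp: openin_subtopology)
  have "inj_on f (topspace X)"
    using hom homeomorphic_imp_injective_map by blast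
  then have "U = {x \<in> topspace X. f x \<in> G}"
    using G(2) openin_subset[OF U] inj_on_image_mem_iff[of f "topspace X"] by blast
  with G(1) show thesis by (rule that)
qed

lemma embedding_map_compactin_preimage:
  assumes f: "embedding_map X K f" and T: "compactin K T" "T \<subseteq> f ` topspace X"
  shows "compactin X {x \<in> topspace X. f x \<in> T}"
proof -
  have "f ` {x \<in> topspace X. f x \<in> T} = T"
    using T(2) by blast
  moreover have "compactin (subtopology K (f ` topspace X)) T"
    using T by (simp add: compactin_subtopology)
  ultimately show ?thesis
    using f homeomorphic_map_compactness[of X _ f "{x \<in> topspace X. f x \<in> T}"]
    by (simp add: embedding_map_def)
qed

lemma embedding_map_image_disjoint_closure_of:
  assumes f: "embedding_map X K f" and C: "closedin X C"
  shows "f ` (topspace X - C) \<inter> K closure_of (f ` C) = {}"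
proof -
  have "openin X (topspace X - C)"
    using C by (simp add: closedin_def)
  then obtain G where G: "openin K G" "topspace X - C = {x \<in> topspace X. f x \<in> G}"
    using embedding_map_openin_preimage[OF f] by metis
  have "G \<inter> f ` C = {}"
    using G(2) closedin_subset[OF C] by blast
  then have "G \<inter> K closure_of (f ` C) = {}"
    by (simp add: openin_Int_closure_of_eq_empty G(1))
  moreover have "f ` (topspace X - C) \<subseteq> G"
    using G(2) by blast
  ultimately show ?thesis
    by blast
qed

lemma regular_Lindelof_imp_fsigma_between:
  assumes L: "regular_space L" and T: "Lindelof_space (subtopology L T)"
    and U: "openin L U" and "T \<subseteq> U"
  obtains S where "fsigma_in L S" "T \<subseteq> S" "S \<subseteq> U"
proof -
  have "\<exists>W. openin L W \<and> t \<in> W \<and> L closure_of W \<subseteq> U" if "t \<in> T" for t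
  proof -
    have "closedin L (topspace L - U)" "t \<in> topspace L - (topspace L - U)"
      using U \<open>T \<subseteq> U\<close> that openin_subset[OF U] by auto
    then obtain W where "openin L W" "t \<in> W" "disjnt (topspace L - U) (L closure_of W)"
      using L unfolding regular_space by blast
    then show ?thesis
      using closure_of_subset_topspace[of L W] by (auto simp: disjnt_def)
  qed
  then obtain W where W: "\<And>t. t \<in> T \<Longrightarrow> openin L (W t) \<and> t \<in> W t \<and> L closure_of (W t) \<subseteq> U"
    by metis
  have "(\<forall>V\<in>W ` T. openin L V) \<and> topspace L \<inter> T \<subseteq> \<Union> (W ` T)"
    using W by blast
  then obtain \<V> where \<V>: "countable \<V>" "\<V> \<subseteq> W ` T" "topspace L \<inter> T \<subseteq> \<Union>\<V>"
    using T[unfolded Lindelof_space_subtopology, rule_format, of "W ` T"] by blast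
  then obtain A where A: "countable A" "A \<subseteq> T" "\<V> = W ` A"
    by (meson countable_subset_image)
  show thesis
  proof
    show "fsigma_in L (\<Union>t\<in>A. L closure_of (W t))"
      using A(1) by (intro fsigma_in_Union) (auto intro: closed_imp_fsigma_in)
    have "T \<subseteq> topspace L"
      using \<open>T \<subseteq> U\<close> openin_subset[OF U] by blast
    then have "T \<subseteq> (\<Union>t\<in>A. W t)"
      using \<V>(3) A(3) by blast
    also have "\<dots> \<subseteq> (\<Union>t\<in>A. L closure_of (W t))"
      using A(2) W by (intro UN_mono closure_of_subset openin_subset) auto
    finally show "T \<subseteq> (\<Union>t\<in>A. L closure_of (W t))" .
    show "(\<Union>t\<in>A. L closure_of (W t)) \<subseteq> U"
      using A(2) W by blast
  qed
qed

lemma compact_space_nest_subset_openin: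
  fixes G :: "nat \<Rightarrow> 'a set"
  assumes K: "compact_space K" and G: "\<And>i. closedin K (G i)"
    and U: "openin K U" and sub: "topspace K \<inter> (\<Inter>i. G i) \<subseteq> U"
  obtains n where "topspace K \<inter> (\<Inter>i<n. G i) \<subseteq> U"
proof (rule ccontr)
  assume none: "\<not> thesis"
  define C where "C n = topspace K \<inter> (\<Inter>i<n. G i) - U" for n
  have "closedin K (topspace K \<inter> (\<Inter>i<n. G i))" for n
  proof (induction n)
    case (Suc n)
    have "topspace K \<inter> (\<Inter>i<Suc n. G i) = G n \<inter> (topspace K \<inter> (\<Inter>i<n. G i))"
      by (auto simp: lessThan_Suc)
    then show ?case
      using Suc G by (simp add: closedin_Int)
  qed simp
  then have "closedin K (C n)" for n
    unfolding C_def using U by blast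
  moreover have "C n \<noteq> {}" for n
    using none that unfolding C_def by blast
  moreover have "decseq C"
    by (rule decseq_SucI) (auto simp: C_def lessThan_Suc)
  ultimately have "(\<Inter>n. C n) \<noteq> {}"
    using compact_space_imp_nest[OF K] by blast
  moreover have "(\<Inter>n. C n) \<subseteq> topspace K \<inter> (\<Inter>i. G i) - U"
  proof
    fix x assume x: "x \<in> (\<Inter>n. C n)"
    then have "x \<in> C (Suc i)" for i
      by blast
    then have "x \<in> G i" for i
      by (auto simp: C_def)
    moreover have "x \<in> C 0"
      using x by blast
    ultimately show "x \<in> topspace K \<inter> (\<Inter>i. G i) - U"
      by (auto simp: C_def)
  qed
  ultimately show False
    using sub by (metis Diff_eq_empty_iff subset_empty subset_trans)
qed

lemma dependent_list_choice:
  assumes "P []" and "\<And>l. P l \<Longrightarrow> \<exists>m. P (l @ [m])"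
  obtains b :: "nat \<Rightarrow> 'a" where "\<And>n. P (map b [0..<n])"
proof -
  have "\<exists>l. length l = 0 \<and> P l"
    using assms(1) by blast
  moreover have "\<exists>l'. (length l' = Suc n \<and> P l') \<and> (\<exists>m. l' = l @ [m])" if l: "length l = n \<and> P l" for n l
  proof -
    obtain m where "P (l @ [m])"
      using assms(2) l by blast
    with l show ?thesis
      by (intro exI[of _ "l @ [m]"]) auto
  qed
  ultimately obtain f where f: "\<And>n. (length (f n) = n \<and> P (f n)) \<and> (\<exists>m. f (Suc n) = f n @ [m])"
    using dependent_nat_choice[of "\<lambda>n l. length l = n \<and> P l" "\<lambda>_ l l'. \<exists>m. l' = l @ [m]"] by blast
  define b where "b i = f (Suc i) ! i" for i
  have fb: "f n = map b [0..<n]" for n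
  proof (induction n)
    case 0
    then show ?case
      using f[of 0] by simp
  next
    case (Suc n)
    then show ?case
      using f[of n] by (auto simp: b_def nth_append)
  qed
  show thesis
  proof (rule that)
    show "P (map b [0..<n])" for n
      using f[of n] fb[of n] by simp
  qed
qed

lemma fsigmadelta_in_imp_closed_seq:
  assumes "fsigmadelta_in K S"
  obtains F :: "nat \<Rightarrow> nat \<Rightarrow> 'a set"
  where "\<And>n m. closedin K (F n m)" "S = topspace K \<inter> (\<Inter>n. \<Union>m. F n m)"
proof -
  obtain \<T> where \<T>: "countable \<T>" "\<And>T. T \<in> \<T> \<Longrightarrow> fsigma_in K T" "S = topspace K \<inter> \<Inter>\<T>"
    using assms unfolding fsigmadelta_in_def relative_to_def intersection_of_def by blast
  define \<T>' where "\<T>' = insert (topspace K) \<T>"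
  have "countable \<T>'" "\<T>' \<noteq> {}"
    using \<T>(1) by (auto simp: \<T>'_def)
  then have range: "range (from_nat_into \<T>') = \<T>'"
    by (simp add: range_from_nat_into)
  have "\<exists>C :: nat \<Rightarrow> 'a set. (\<forall>m. closedin K (C m)) \<and> (\<Union>m. C m) = from_nat_into \<T>' n" for n
  proof -
    have "fsigma_in K (from_nat_into \<T>' n)"
      using from_nat_into[OF \<open>\<T>' \<noteq> {}\<close>, of n] \<T>(2) by (auto simp: \<T>'_def)
    then show ?thesis
      unfolding fsigma_in_ascending by blast
  qed
  then have "\<exists>F :: nat \<Rightarrow> nat \<Rightarrow> 'a set. \<forall>n. (\<forall>m. closedin K (F n m)) \<and> (\<Union>m. F n m) = from_nat_into \<T>' n"
    by (intro choice allI)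
  then obtain F :: "nat \<Rightarrow> nat \<Rightarrow> 'a set" where F: "\<forall>n. (\<forall>m. closedin K (F n m)) \<and> (\<Union>m. F n m) = from_nat_into \<T>' n"
    by blast
  have closed: "\<And>n m. closedin K (F n m)"
    using F by blast
  have "S = topspace K \<inter> \<Inter>\<T>'"
    using \<T>(3) by (auto simp: \<T>'_def)
  also have "\<dots> = topspace K \<inter> (\<Inter>n. \<Union>m. F n m)"
    using F range by simp
  finally show thesis
    by (rule that[OF closed])
qed

lemma fsigmadelta_in_INT:
  assumes "countable I" "\<And>i. i \<in> I \<Longrightarrow> fsigma_in X (R i)"
  shows "fsigmadelta_in X (topspace X \<inter> (\<Inter>i\<in>I. R i))"
  unfolding fsigmadelta_in_def relative_to_def intersection_of_def
  using assms by blast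

definition tree_cell :: "'a topology \<Rightarrow> ('a \<Rightarrow> 'b) \<Rightarrow> (nat \<Rightarrow> nat \<Rightarrow> 'b set) \<Rightarrow> nat list \<Rightarrow> 'a set"
  where "tree_cell X f F l = {x \<in> topspace X. \<forall>i<length l. f x \<in> F i (l ! i)}"

lemma tree_cell_Nil [simp]: "tree_cell X f F [] = topspace X"
  by (simp add: tree_cell_def)

lemma tree_cell_snoc: "tree_cell X f F (l @ [m]) = {x \<in> tree_cell X f F l. f x \<in> F (length l) m}"
  by (auto simp: tree_cell_def nth_append less_Suc_eq)

lemma tree_cell_map_upt:
  "tree_cell X f F (map b [0..<n]) = {x \<in> topspace X. \<forall>i<n. f x \<in> F i (b i)}"
  by (simp add: tree_cell_def)

lemma closedin_tree_cell:
  assumes "continuous_map X K f" "\<And>n m. closedin K (F n m)"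
  shows "closedin X (tree_cell X f F l)"
proof -
  define G where "G = \<Inter>(insert (topspace K) ((\<lambda>i. F i (l ! i)) ` {..<length l}))"
  have G: "closedin K G"
    unfolding G_def using assms(2) by (intro closedin_Inter) auto
  have "tree_cell X f F l = {x \<in> topspace X. f x \<in> G}"
    using continuous_map_image_subset_topspace[OF assms(1)] by (auto simp: tree_cell_def G_def)
  then show ?thesis
    using closedin_continuous_map_preimage[OF assms(1) G] by simp
qed

lemma tree_cell_covered_by_children:
  assumes "f ` topspace X \<subseteq> (\<Inter>n. \<Union>m. F n m)" "x \<in> tree_cell X f F l"
  shows "\<exists>m. x \<in> tree_cell X f F (l @ [m])"
proof -
  have "x \<in> topspace X"
    using assms(2) by (simp add: tree_cell_def)
  then obtain m where "f x \<in> F (length l) m"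
    using assms(1) by blast
  then show ?thesis
    using assms(2) by (auto simp: tree_cell_snoc)
qed

lemma branch_closure_point_in_image:
  fixes G :: "nat \<Rightarrow> 'b set"
  assumes K: "compact_space K" and f: "embedding_map X K f"
    and G: "\<And>i. closedin K (G i)" and GX: "topspace K \<inter> (\<Inter>i. G i) \<subseteq> f ` topspace X"
    and L: "Hausdorff_space L" and g: "continuous_map X L g"
    and z: "\<And>n. z \<in> L closure_of (g ` {x \<in> topspace X. \<forall>i<n. f x \<in> G i})"
  shows "z \<in> g ` {x \<in> topspace X. \<forall>i. f x \<in> G i}"
proof -
  define T where "T = topspace K \<inter> (\<Inter>i. G i)"
  define D where "D = {x \<in> topspace X. f x \<in> T}"
  have fK: "\<And>x. x \<in> topspace X \<Longrightarrow> f x \<in> topspace K"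
    using continuous_map_image_subset_topspace[OF embedding_map_imp_continuous_map[OF f]] by blast
  have D_eq: "D = {x \<in> topspace X. \<forall>i. f x \<in> G i}"
    using fK by (auto simp: D_def T_def)
  have "closedin K T"
    unfolding T_def using closedin_Inter[of "insert (topspace K) (range G)" K] G by auto
  then have "compactin X D"
    unfolding D_def using GX T_def closedin_compact_space[OF K]
    by (intro embedding_map_compactin_preimage[OF f]) auto
  then have gD: "compactin L (g ` D)"
    using image_compactin g by blast
  show ?thesis
  proof (rule ccontr)
    assume "z \<notin> g ` {x \<in> topspace X. \<forall>i. f x \<in> G i}"
    then have "disjnt {z} (g ` D)"
      by (simp add: D_eq)
    moreover have "z \<in> topspace L"
      using z[of 0] by (simp add: in_closure_of)
    ultimately obtain V W where VW: "openin L V" "openin L W" "z \<in> V" "g ` D \<subseteq> W" "disjnt V W"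
      using Hausdorff_space_compact_separation[OF L _ gD] by (metis compactin_sing insert_subset)
    obtain U where U: "openin K U" "{x \<in> topspace X. g x \<in> W} = {x \<in> topspace X. f x \<in> U}"
      using embedding_map_openin_preimage[OF f openin_continuous_map_preimage[OF g VW(2)]] by metis
    have "T \<subseteq> U"
    proof
      fix t assume "t \<in> T"
      then obtain x where x: "x \<in> D" "t = f x"
        using GX by (auto simp: T_def D_def)
      then have "x \<in> {x \<in> topspace X. g x \<in> W}"
        using VW(4) by (auto simp: D_def)
      then show "t \<in> U"
        unfolding U(2) x(2) by blast
    qed
    then obtain n where n: "topspace K \<inter> (\<Inter>i<n. G i) \<subseteq> U"
      unfolding T_def by (rule compact_space_nest_subset_openin[OF K G U(1)])
    have "g ` {x \<in> topspace X. \<forall>i<n. f x \<in> G i} \<subseteq> W"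
    proof clarify
      fix x assume x: "x \<in> topspace X" "\<forall>i<n. f x \<in> G i"
      then have "x \<in> {x \<in> topspace X. f x \<in> U}"
        using n fK by blast
      then show "g x \<in> W"
        unfolding U(2)[symmetric] by blast
    qed
    then have "V \<inter> g ` {x \<in> topspace X. \<forall>i<n. f x \<in> G i} = {}"
      using VW(5) by (auto simp: disjnt_def)
    then have "V \<inter> L closure_of (g ` {x \<in> topspace X. \<forall>i<n. f x \<in> G i}) = {}"
      by (simp add: openin_Int_closure_of_eq_empty VW(1))
    then show False
      using z[of n] VW(3) by blast
  qed
qed

lemma tree_closure_point_in_image:
  assumes K: "compact_space K" and f: "embedding_map X K f"
    and F: "\<And>n m. closedin K (F n m)" and FX: "f ` topspace X = topspace K \<inter> (\<Inter>n. \<Union>m. F n m)"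
    and L: "Hausdorff_space L" and g: "continuous_map X L g"
    and z: "z \<in> L closure_of (g ` topspace X)"
    and extend: "\<And>l. z \<in> L closure_of (g ` tree_cell X f F l)
                    \<Longrightarrow> \<exists>m. z \<in> L closure_of (g ` tree_cell X f F (l @ [m]))"
  shows "z \<in> g ` topspace X"
proof -
  have "z \<in> L closure_of (g ` tree_cell X f F [])"
    using z by simp
  then obtain b where b: "\<And>n. z \<in> L closure_of (g ` tree_cell X f F (map b [0..<n]))"
    using dependent_list_choice[where P = "\<lambda>l. z \<in> L closure_of (g ` tree_cell X f F l)", OF _ extend]
    by blast
  have b': "z \<in> L closure_of (g ` {x \<in> topspace X. \<forall>i<n. f x \<in> F i (b i)})" for n
    using b[of n] unfolding tree_cell_map_upt .
  have GX: "topspace K \<inter> (\<Inter>i. F i (b i)) \<subseteq> f ` topspace X"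
    unfolding FX by blast
  have "z \<in> g ` {x \<in> topspace X. \<forall>i. f x \<in> F i (b i)}"
    by (rule branch_closure_point_in_image[OF K f F GX L g b'])
  then show ?thesis
    by auto
qed

lemma hereditarily_Lindelof_fsigma_separation:
  assumes X: "hereditarily_Lindelof_space X" and L: "regular_space L"
    and g: "embedding_map X L g" and C: "closedin X C"
  obtains S where "fsigma_in L S" "g ` (topspace X - C) \<subseteq> S" "S \<inter> L closure_of (g ` C) = {}"
proof -
  let ?T = "g ` (topspace X - C)"
  have gL: "g ` topspace X \<subseteq> topspace L"
    using continuous_map_image_subset_topspace[OF embedding_map_imp_continuous_map[OF g]] .
  have "Lindelof_space (subtopology X (topspace X - C))"
    using X by (simp add: hereditarily_Lindelof_space_def)
  moreover have "continuous_map (subtopology X (topspace X - C)) (subtopology L ?T) g"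
    using embedding_map_imp_continuous_map[OF g]
    by (auto intro: continuous_map_from_subtopology simp: continuous_map_in_subtopology)
  moreover have "g ` topspace (subtopology X (topspace X - C)) = topspace (subtopology L ?T)"
    using gL by auto
  ultimately have "Lindelof_space (subtopology L ?T)"
    by (rule Lindelof_space_continuous_map_image)
  moreover have "openin L (topspace L - L closure_of (g ` C))"
    by (simp add: openin_diff)
  moreover have "?T \<subseteq> topspace L - L closure_of (g ` C)"
    using embedding_map_image_disjoint_closure_of[OF g C] gL by blast
  ultimately obtain S where "fsigma_in L S" "?T \<subseteq> S" "S \<subseteq> topspace L - L closure_of (g ` C)"
    using regular_Lindelof_imp_fsigma_between[OF L] by metis
  then show thesis
    using that by blast
qed

lemma image_subset_Un_closure_tree_children:
  assumes g: "continuous_map X L g" and FX: "f ` topspace X \<subseteq> (\<Inter>n. \<Union>m. F n m)"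
    and S: "g ` (topspace X - tree_cell X f F l) \<subseteq> S"
  shows "g ` topspace X \<subseteq> S \<union> (\<Union>m. L closure_of (g ` tree_cell X f F (l @ [m])))"
proof
  fix y assume "y \<in> g ` topspace X"
  then obtain x where x: "x \<in> topspace X" "y = g x"
    by blast
  show "y \<in> S \<union> (\<Union>m. L closure_of (g ` tree_cell X f F (l @ [m])))"
  proof (cases "x \<in> tree_cell X f F l")
    case True
    from tree_cell_covered_by_children[OF FX True]
    obtain m where "x \<in> tree_cell X f F (l @ [m])" ..
    moreover have "g ` tree_cell X f F (l @ [m]) \<subseteq> topspace L"
      using continuous_map_image_subset_topspace[OF g] by (auto simp: tree_cell_def)
    ultimately have "y \<in> L closure_of (g ` tree_cell X f F (l @ [m]))"
      using closure_of_subset x(2) by blast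
    then show ?thesis
      by blast
  qed (use S x in blast)
qed

theorem hereditarily_Lindelof_fsigmadelta_in_embedding:
  fixes X :: "'a topology" and K :: "'b topology" and L :: "'c topology"
  assumes X: "hereditarily_Lindelof_space X"
    and K: "compact_space K" and f: "embedding_map X K f" and XK: "fsigmadelta_in K (f ` topspace X)"
    and L: "regular_space L" "Hausdorff_space L" and g: "embedding_map X L g"
    and dense: "L closure_of (g ` topspace X) = topspace L"
  shows "fsigmadelta_in L (g ` topspace X)"
proof -
  obtain F :: "nat \<Rightarrow> nat \<Rightarrow> 'b set"
    where F: "\<And>n m. closedin K (F n m)" and FX: "f ` topspace X = topspace K \<inter> (\<Inter>n. \<Union>m. F n m)"
    using fsigmadelta_in_imp_closed_seq[OF XK] by blast
  let ?cell = "tree_cell X f F"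
  have FX_sub: "f ` topspace X \<subseteq> (\<Inter>n. \<Union>m. F n m)"
    unfolding FX by blast
  have gL: "g ` topspace X \<subseteq> topspace L"
    using continuous_map_image_subset_topspace[OF embedding_map_imp_continuous_map[OF g]] .
  have "\<exists>S. fsigma_in L S \<and> g ` (topspace X - ?cell l) \<subseteq> S \<and> S \<inter> L closure_of (g ` ?cell l) = {}" for l
    by (rule hereditarily_Lindelof_fsigma_separation[OF X L(1) g
          closedin_tree_cell[where F = F and l = l, OF embedding_map_imp_continuous_map[OF f] F]]) blast
  then obtain S where S: "\<And>l. fsigma_in L (S l)" "\<And>l. g ` (topspace X - ?cell l) \<subseteq> S l"
    "\<And>l. S l \<inter> L closure_of (g ` ?cell l) = {}"
    by metis
  define R where "R l = S l \<union> (\<Union>m. L closure_of (g ` ?cell (l @ [m])))" for l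
  have R_fsigma: "fsigma_in L (R l)" for l
    unfolding R_def using S(1) by (intro fsigma_in_Un fsigma_in_Union) (auto intro: closed_imp_fsigma_in)
  have image_sub: "g ` topspace X \<subseteq> R l" for l
    unfolding R_def
    by (rule image_subset_Un_closure_tree_children[OF embedding_map_imp_continuous_map[OF g] FX_sub S(2)])
  have closure_sub: "z \<in> g ` topspace X" if z: "z \<in> topspace L \<inter> (\<Inter>l. R l)" for z
  proof (rule tree_closure_point_in_image[OF K f F FX L(2) embedding_map_imp_continuous_map[OF g]])
    show "z \<in> L closure_of (g ` topspace X)"
      using z dense by blast
    show "\<exists>m. z \<in> L closure_of (g ` ?cell (l @ [m]))" if "z \<in> L closure_of (g ` ?cell l)" for l
      using z that S(3)[of l] by (auto simp: R_def)
  qed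
  have "g ` topspace X = topspace L \<inter> (\<Inter>l. R l)"
    using image_sub closure_sub gL by blast
  then show ?thesis
    using fsigmadelta_in_INT[of "UNIV :: nat list set" L R] R_fsigma by simp
qed

theorem theorem4p1:
  fixes X :: "'a topology" and cX0 :: "'b topology" and \<phi>0 :: "'a \<Rightarrow> 'b"
  assumes "Tychonoff_space X"
    and "hereditarily_Lindelof_space X"
    and "compactification X cX0 \<phi>0"
    and "fsigmadelta_in cX0 (\<phi>0 ` topspace X)"
  shows "\<forall>(cX :: 'c topology) \<phi>. compactification X cX \<phi> \<longrightarrow>
           fsigmadelta_in cX (\<phi> ` topspace X)"
proof (intro allI impI)
  fix L :: "'c topology" and g
  assume L: "compactification X L g"
  have "compact_space cX0" "embedding_map X cX0 \<phi>0"
    using assms(3) by (simp_all add: compactification_def)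
  moreover have "compact_space L" "Hausdorff_space L" "embedding_map X L g"
    "L closure_of (g ` topspace X) = topspace L"
    using L by (simp_all add: compactification_def)
  ultimately show "fsigmadelta_in L (g ` topspace X)"
    using hereditarily_Lindelof_fsigmadelta_in_embedding[OF assms(2) _ _ assms(4)]
      compact_Hausdorff_imp_regular_space by blast
qed

end
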